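(* Let $r\in(0,1]$ and let $(\psi(k))_{k\in\mathbb{N}}$ be a positive nonincreasing sequence for which there exists $\varepsilon>0$ such that the sequence $k^{r+\varepsilon}\psi(k)$ is almost decreasing. Then there is a constant $K$, depending on $\psi$ and $r$, such that for all $n\in\mathbb{N}$ $$\psi(n)\,n^{r}\le\sum_{k=n}^{\infty}\Delta\psi(k)\,k^{r}\le K\,\psi(n)\,n^{r}.$$
   Context: $\Delta\psi(k)=\psi(k)-\psi(k+1)$. A sequence $(a_k)$ is almost decreasing if there is a constant $K_1>0$ such that $a_{k_1}\le K_1 a_{k_2}$ for all $k_1>k_2\ge1$. *)

theory Defs
  imports "HOL-Analysis.Analysis"
begin

definition Delta :: "(nat \<Rightarrow> real) \<Rightarrow> nat \<Rightarrow> real" where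
  "Delta \<psi> k = \<psi> k - \<psi> (Suc k)"

definition almost_decreasing :: "(nat \<Rightarrow> real) \<Rightarrow> bool" where
  "almost_decreasing a \<longleftrightarrow> (\<exists>K1>0. \<forall>k1 k2. k1 > k2 \<and> k2 \<ge> 1 \<longrightarrow> a k1 \<le> K1 * a k2)"

end

theory Submission
  imports Defs
begin

text \<open>Summation by parts writes the tail sum as \<open>\<psi>(n) n^r\<close> plus the terms
  \<open>\<psi>(m) (m^r - (m-1)^r) \<le> \<psi>(m) m^(r-1)\<close>, \<open>m > n\<close>. Almost decrease of \<open>k^(r+\<epsilon>) \<psi>(k)\<close>
  bounds these by \<open>K\<^sub>1 \<psi>(n) n^(r+\<epsilon>) m^(-1-\<epsilon>)\<close>, and since
  \<open>\<epsilon> m^(-1-\<epsilon>) \<le> (m-1)^(-\<epsilon>) - m^(-\<epsilon>)\<close> they telescope to at most \<open>(K\<^sub>1/\<epsilon>) \<psi>(n) n^r\<close>.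
  For the lower bound, \<open>k^r \<ge> n^r\<close> and the differences \<open>\<Delta>\<psi>(k)\<close> sum to \<open>\<psi>(n)\<close>,
  because \<open>\<psi> \<rightarrow> 0\<close>.\<close>

lemma powr_sub_powr_pred_le:
  fixes m r :: real
  assumes "1 < m" "0 < r" "r \<le> 1"
  shows "m powr r - (m - 1) powr r \<le> m powr (r - 1)"
proof -
  define x where "x = (m - 1) / m"
  have x: "0 \<le> x" "x \<le> 1" using assms by (auto simp: x_def)
  have "x \<le> x powr r" using powr_mono'[OF assms(3) x] x by simp
  have "m - 1 = x * m" using assms by (simp add: x_def)
  hence "(m - 1) powr r = x powr r * m powr r" using x assms by (simp add: powr_mult)
  also have "\<dots> \<ge> x * m powr r" using \<open>x \<le> x powr r\<close> by (intro mult_right_mono) auto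
  also have "x * m powr r = m powr r - m powr (r - 1)"
    using assms by (simp add: x_def powr_diff field_simps)
  finally show ?thesis by linarith
qed

lemma powr_neg_pred_sub_powr_neg_ge:
  fixes m e :: real
  assumes "1 < m" "0 < e"
  shows "e * m powr (-1 - e) \<le> (m - 1) powr (-e) - m powr (-e)"
proof -
  have "ln ((m - 1) / m) \<le> (m - 1) / m - 1" using assms by (intro ln_le_minus_one) auto
  hence "1 / m \<le> ln m - ln (m - 1)" using assms by (simp add: ln_div field_simps)
  hence "1 + e / m \<le> 1 + e * (ln m - ln (m - 1))"
    using mult_left_mono[of "1 / m" _ e] assms by simp
  also have "\<dots> \<le> exp (e * (ln m - ln (m - 1)))" by (rule exp_ge_add_one_self)
  finally have "m powr (-e) * (1 + e / m) \<le> m powr (-e) * exp (e * (ln m - ln (m - 1)))"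
    by (intro mult_left_mono) auto
  moreover have "(m - 1) powr (-e) = m powr (-e) * exp (e * (ln m - ln (m - 1)))"
    using assms by (simp add: powr_def exp_add[symmetric] algebra_simps)
  moreover have "m powr (-1 - e) = m powr (-e) / m"
    using assms by (simp add: powr_diff powr_minus field_simps)
  ultimately show ?thesis using assms by (simp add: algebra_simps)
qed

lemma sum_Delta_shift:
  "(\<Sum>i<N. Delta \<psi> (n + i)) = \<psi> n - \<psi> (n + N)"
  using sum_lessThan_telescope'[of "\<lambda>i. \<psi> (n + i)" N] by (simp add: Delta_def)

lemma sum_Delta_mult_by_parts:
  "(\<Sum>i<N. Delta \<psi> (n + i) * w (n + i)) + \<psi> (n + N) * w (n + N)
     = \<psi> n * w n + (\<Sum>i<N. \<psi> (Suc (n + i)) * (w (Suc (n + i)) - w (n + i)))"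
  by (induction N) (simp_all add: Delta_def algebra_simps)

lemma almost_decreasing_powr_mult_tendsto_zero:
  fixes \<psi> :: "nat \<Rightarrow> real"
  assumes "0 < s" and nonneg: "\<And>k. k \<ge> 1 \<Longrightarrow> \<psi> k \<ge> 0"
    and "almost_decreasing (\<lambda>k. real k powr s * \<psi> k)"
  shows "\<psi> \<longlonglongrightarrow> 0"
proof -
  obtain K1 where K1: "\<And>k1 k2. k1 > k2 \<Longrightarrow> k2 \<ge> 1 \<Longrightarrow>
       real k1 powr s * \<psi> k1 \<le> K1 * (real k2 powr s * \<psi> k2)"
    using assms(3) unfolding almost_decreasing_def by blast
  show ?thesis
  proof (rule tendsto_sandwich[of "\<lambda>_. 0" _ _ "\<lambda>k. K1 * \<psi> 1 * real k powr (-s)"])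
    show "\<forall>\<^sub>F k in sequentially. 0 \<le> \<psi> k"
      using eventually_ge_at_top[of 1] by eventually_elim (rule nonneg)
    show "\<forall>\<^sub>F k in sequentially. \<psi> k \<le> K1 * \<psi> 1 * real k powr (-s)"
      using eventually_ge_at_top[of 2]
    proof eventually_elim
      case (elim k)
      have "real k powr s > 0" using elim by simp
      moreover have "real k powr s * \<psi> k \<le> K1 * \<psi> 1" using K1[of 1 k] elim by simp
      ultimately have "\<psi> k \<le> K1 * \<psi> 1 / real k powr s" by (simp add: field_simps)
      thus ?case by (simp add: powr_minus divide_inverse)
    qed
    have "(\<lambda>k. real k powr (-s)) \<longlonglongrightarrow> 0"
      using \<open>0 < s\<close> by (intro tendsto_neg_powr filterlim_real_sequentially) auto
    thus "(\<lambda>k. K1 * \<psi> 1 * real k powr (-s)) \<longlonglongrightarrow> 0"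
      using tendsto_mult_right_zero by blast
  qed auto
qed

lemma sum_Delta_powr_ge:
  fixes \<psi> :: "nat \<Rightarrow> real"
  assumes "0 < r" "n \<ge> 1" and noninc: "\<And>k. k \<ge> 1 \<Longrightarrow> \<psi> (Suc k) \<le> \<psi> k"
  shows "real n powr r * (\<psi> n - \<psi> (n + N)) \<le> (\<Sum>i<N. Delta \<psi> (n + i) * real (n + i) powr r)"
proof -
  have "real n powr r * (\<psi> n - \<psi> (n + N)) = (\<Sum>i<N. Delta \<psi> (n + i) * real n powr r)"
    by (simp add: sum_distrib_left[symmetric] sum_Delta_shift mult.commute)
  also have "\<dots> \<le> (\<Sum>i<N. Delta \<psi> (n + i) * real (n + i) powr r)"
  proof (intro sum_mono mult_left_mono)
    fix i
    show "real n powr r \<le> real (n + i) powr r" using assms by (intro powr_mono2) auto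
    show "0 \<le> Delta \<psi> (n + i)" using noninc[of "n + i"] assms by (simp add: Delta_def)
  qed
  finally show ?thesis .
qed

lemma sum_Delta_powr_le:
  fixes \<psi> :: "nat \<Rightarrow> real"
  assumes r: "0 < r" "r \<le> 1" and "n \<ge> 1" "0 < e" "0 < K1"
    and pos: "\<And>k. k \<ge> 1 \<Longrightarrow> \<psi> k > 0"
    and AD: "\<And>k1 k2. k1 > k2 \<Longrightarrow> k2 \<ge> 1 \<Longrightarrow>
       real k1 powr (r + e) * \<psi> k1 \<le> K1 * (real k2 powr (r + e) * \<psi> k2)"
  shows "(\<Sum>i<N. Delta \<psi> (n + i) * real (n + i) powr r) \<le> (1 + K1 / e) * \<psi> n * real n powr r"
proof -
  define B where "B = K1 / e * \<psi> n * real n powr (r + e)"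
  have "B \<ge> 0" using assms pos[of n] by (simp add: B_def less_imp_le)
  have step: "\<psi> (Suc (n + i)) * (real (Suc (n + i)) powr r - real (n + i) powr r)
      \<le> B * (real (n + i) powr (-e) - real (Suc (n + i)) powr (-e))" for i
  proof -
    define m where "m = real (Suc (n + i))"
    have m: "m > 1" "real (n + i) = m - 1" using \<open>n \<ge> 1\<close> by (auto simp: m_def)
    have "\<psi> (Suc (n + i)) * (m powr r - (m - 1) powr r) \<le> \<psi> (Suc (n + i)) * m powr (r - 1)"
      using powr_sub_powr_pred_le[OF m(1) r] pos[of "Suc (n + i)"] by (intro mult_left_mono) auto
    also have "\<dots> = (m powr (r + e) * \<psi> (Suc (n + i))) * m powr (-1 - e)"
      using m by (simp add: powr_add[symmetric])
    also have "\<dots> \<le> (K1 * (real n powr (r + e) * \<psi> n)) * m powr (-1 - e)"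
      using AD[of n "Suc (n + i)"] \<open>n \<ge> 1\<close> by (intro mult_right_mono) (auto simp: m_def)
    also have "\<dots> = B * (e * m powr (-1 - e))"
      using \<open>0 < e\<close> by (simp add: B_def)
    also have "\<dots> \<le> B * ((m - 1) powr (-e) - m powr (-e))"
      using powr_neg_pred_sub_powr_neg_ge[OF m(1) \<open>0 < e\<close>] \<open>B \<ge> 0\<close> by (intro mult_left_mono)
    finally show ?thesis by (simp add: m m_def)
  qed
  have "(\<Sum>i<N. Delta \<psi> (n + i) * real (n + i) powr r)
      \<le> (\<Sum>i<N. Delta \<psi> (n + i) * real (n + i) powr r) + \<psi> (n + N) * real (n + N) powr r"
    using pos[of "n + N"] \<open>n \<ge> 1\<close> by (simp add: less_imp_le)
  also have "\<dots> = \<psi> n * real n powr r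
      + (\<Sum>i<N. \<psi> (Suc (n + i)) * (real (Suc (n + i)) powr r - real (n + i) powr r))"
    by (rule sum_Delta_mult_by_parts)
  also have "\<dots> \<le> \<psi> n * real n powr r
      + (\<Sum>i<N. B * (real (n + i) powr (-e) - real (Suc (n + i)) powr (-e)))"
    by (intro add_left_mono sum_mono step)
  also have "\<dots> = \<psi> n * real n powr r + B * (real n powr (-e) - real (n + N) powr (-e))"
    using sum_lessThan_telescope'[of "\<lambda>i. real (n + i) powr (-e)" N]
    by (simp add: sum_distrib_left[symmetric])
  also have "\<dots> \<le> \<psi> n * real n powr r + B * real n powr (-e)"
    using \<open>B \<ge> 0\<close> by (intro add_left_mono mult_left_mono) auto
  also have "\<dots> = (1 + K1 / e) * \<psi> n * real n powr r"
    using \<open>n \<ge> 1\<close> by (simp add: B_def powr_add[symmetric] algebra_simps)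
  finally show ?thesis .
qed

lemma tail_sum_Delta_powr_bounds:
  fixes \<psi> :: "nat \<Rightarrow> real"
  assumes r: "0 < r" "r \<le> 1" and n: "n \<ge> 1" and "0 < e" "0 < K1"
    and pos: "\<And>k. k \<ge> 1 \<Longrightarrow> \<psi> k > 0"
    and noninc: "\<And>k. k \<ge> 1 \<Longrightarrow> \<psi> (Suc k) \<le> \<psi> k"
    and AD: "\<And>k1 k2. k1 > k2 \<Longrightarrow> k2 \<ge> 1 \<Longrightarrow>
       real k1 powr (r + e) * \<psi> k1 \<le> K1 * (real k2 powr (r + e) * \<psi> k2)"
    and lim: "\<psi> \<longlonglongrightarrow> 0"
  shows "summable (\<lambda>i. Delta \<psi> (n + i) * real (n + i) powr r)"
    and "\<psi> n * real n powr r \<le> (\<Sum>i. Delta \<psi> (n + i) * real (n + i) powr r)"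
    and "(\<Sum>i. Delta \<psi> (n + i) * real (n + i) powr r) \<le> (1 + K1 / e) * \<psi> n * real n powr r"
proof -
  let ?a = "\<lambda>i. Delta \<psi> (n + i) * real (n + i) powr r"
  have nonneg: "?a i \<ge> 0" for i using noninc[of "n + i"] n by (simp add: Delta_def)
  note upper = sum_Delta_powr_le[OF r n \<open>0 < e\<close> \<open>0 < K1\<close> pos AD]
  show "summable ?a" using summableI_nonneg_bounded[OF nonneg upper] .
  show "suminf ?a \<le> (1 + K1 / e) * \<psi> n * real n powr r"
    using suminf_le_const[OF \<open>summable ?a\<close> upper] .
  have "(\<lambda>N. \<psi> (n + N)) \<longlonglongrightarrow> 0"
    using LIMSEQ_ignore_initial_segment[OF lim, of n] by (simp add: add.commute)
  hence "(\<lambda>N. real n powr r * (\<psi> n - \<psi> (n + N))) \<longlonglongrightarrow> real n powr r * \<psi> n"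
    using tendsto_mult_left[OF tendsto_diff[OF tendsto_const]] by fastforce
  hence "real n powr r * \<psi> n \<le> suminf ?a"
    by (rule LIMSEQ_le[OF _ summable_LIMSEQ[OF \<open>summable ?a\<close>]])
      (use sum_Delta_powr_ge[OF r(1) n] noninc in auto)
  thus "\<psi> n * real n powr r \<le> suminf ?a" by (simp add: mult.commute)
qed

theorem lemma1:
  fixes \<psi> :: "nat \<Rightarrow> real" and r :: real
  assumes r: "0 < r" "r \<le> 1"
    and pos: "\<And>k. k \<ge> 1 \<Longrightarrow> \<psi> k > 0"
    and noninc: "\<And>k. k \<ge> 1 \<Longrightarrow> \<psi> (Suc k) \<le> \<psi> k"
    and ad: "\<exists>\<epsilon>>0. almost_decreasing (\<lambda>k. real k powr (r + \<epsilon>) * \<psi> k)"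
  shows "\<exists>K. \<forall>n\<ge>1. summable (\<lambda>i. Delta \<psi> (n + i) * real (n + i) powr r)
            \<and> \<psi> n * real n powr r \<le> (\<Sum>i. Delta \<psi> (n + i) * real (n + i) powr r)
            \<and> (\<Sum>i. Delta \<psi> (n + i) * real (n + i) powr r) \<le> K * \<psi> n * real n powr r"
proof -
  obtain e where "e > 0" and ade: "almost_decreasing (\<lambda>k. real k powr (r + e) * \<psi> k)"
    using ad by blast
  then obtain K1 where "K1 > 0" and AD: "\<And>k1 k2. k1 > k2 \<Longrightarrow> k2 \<ge> 1 \<Longrightarrow>
       real k1 powr (r + e) * \<psi> k1 \<le> K1 * (real k2 powr (r + e) * \<psi> k2)"
    unfolding almost_decreasing_def by blast
  have "\<psi> \<longlonglongrightarrow> 0"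
    using almost_decreasing_powr_mult_tendsto_zero[OF _ _ ade] r \<open>e > 0\<close> pos
    by (simp add: less_imp_le)
  show ?thesis
    using tail_sum_Delta_powr_bounds[OF r _ \<open>e > 0\<close> \<open>K1 > 0\<close> pos noninc AD \<open>\<psi> \<longlonglongrightarrow> 0\<close>]
    by blast
qed

end
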